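(* Let $X$ be a normed space and $X_1\subset X_2\subset\cdots$ an increasing sequence of finite dimensional subspaces with $\bigcup_n X_n$ dense in $X$. Let $\rho$ be an accumulation point of the sequence $(r(S_{X_n}))_n$. Then $\rho\in\mathcal{R}(X)$.
   Context: For a normed space $Z$ with unit sphere $S_Z$ and kernel $\|x-y\|$, $R(S_Z):=\bigcap_{m\in\mathbb{N}}\bigcap_{w_1,\dots,w_m\in S_Z}\overline{\mathrm{conv}}\{\frac1m\sum_{j=1}^m\|x-w_j\|:x\in S_Z\}$ and $\mathcal{R}(X):=R(S_X)$. For finite dimensional $X_n$ (with the norm of $X$ restricted), $S_{X_n}$ is compact and $R(S_{X_n})$ consists of exactly one number (a known fact), denoted $r(S_{X_n})$. *)

theory Defs
  imports "HOL-Analysis.Analysis"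
begin

definition R_set :: "'a::real_normed_vector set \<Rightarrow> real set" where
  "R_set S = (\<Inter>m\<in>{m::nat. m \<ge> 1}. \<Inter>w\<in>{w::nat \<Rightarrow> 'a. \<forall>j<m. w j \<in> S}.
      closure (convex hull ((\<lambda>x. (\<Sum>j<m. norm (x - w j)) / real m) ` S)))"

text \<open>The unique element of R(S) (meaningful when R(S) is a singleton,
  e.g. for the unit sphere of a finite dimensional subspace).\<close>
definition r_num :: "'a::real_normed_vector set \<Rightarrow> real" where
  "r_num S = (THE \<rho>. R_set S = {\<rho>})"

definition unit_sphere_of :: "'a::real_normed_vector set \<Rightarrow> 'a set" where
  "unit_sphere_of V = sphere 0 1 \<inter> V"

definition calR :: "'a::real_normed_vector itself \<Rightarrow> real set" where
  "calR _ = R_set (sphere (0::'a) 1)"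

end

theory Submission
  imports Defs
begin

text \<open>
  For w_1, ..., w_m in a compact set S write f_w(x) for the mean distance from x to the w_j.
  Counting the distances between two families w, u in two ways shows that the mean of f_w over
  the u_i equals the mean of f_u over the w_j, so any two of the intervals [inf f_w, sup f_w]
  intersect and R(S) is non-empty. Moreover, the minimax theorem for the finite game on an
  eps-net of S whose payoff is the distance, together with rational approximation of the optimal
  mixed strategies, yields w and u with sup f_u \<le> inf f_w + eps; hence R(S) is the single
  point r(S).

  For the corollary fix w_1, ..., w_m on the unit sphere of X. By density they are eps-close to
  unit vectors u_j of X_n once n is large, and then f_u and f_w differ by at most eps. As the
  unit sphere of X_n lies in that of X, r(S_{X_n}) lies within eps of the interval
  [inf f_w, sup f_w] taken over the unit sphere of X, and so does every accumulation point.
\<close>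

section \<open>Compactness of finite-dimensional unit spheres\<close>

lemma compact_PiE_box:
  "compact (PiE UNIV (\<lambda>i. if i \<in> I then {a..b} else {0::real}))"
proof -
  have "compactin (product_topology (\<lambda>_. euclidean) UNIV)
          (PiE UNIV (\<lambda>i. if i \<in> I then {a..b} else {0::real}))"
    unfolding compactin_PiE by auto
  then show ?thesis
    by (simp add: euclidean_product_topology)
qed

lemma continuous_on_coordinate: "continuous_on S (\<lambda>c. c i)"
  by (rule continuous_on_subset[OF continuous_on_product_coordinates]) simp

lemma independent_lincomb_norm_ge_on_box_boundary:
  fixes B :: "'a::real_normed_vector set"
  assumes "finite B" "independent B"
  obtains \<delta> where "\<delta> > 0"
    "\<And>c. \<forall>v\<in>B. \<bar>c v\<bar> \<le> 1 \<Longrightarrow> \<exists>v\<in>B. \<bar>c v\<bar> = 1 \<Longrightarrow> \<delta> \<le> norm (\<Sum>v\<in>B. c v *\<^sub>R v)"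
proof (cases "B = {}")
  case True
  then show ?thesis using that[of 1] by simp
next
  case False
  define L where "L c = (\<Sum>v\<in>B. c v *\<^sub>R v)" for c :: "'a \<Rightarrow> real"
  define K where "K = PiE UNIV (\<lambda>v. if v \<in> B then {-1..1} else {0::real}) \<inter> (\<Union>b\<in>B. {c. \<bar>c b\<bar> = 1})"
  have "closed {c :: 'a \<Rightarrow> real. \<bar>c b\<bar> = 1}" for b
    by (intro closed_Collect_eq continuous_intros continuous_on_coordinate)
  then have "compact K"
    unfolding K_def using assms(1) by (intro compact_Int_closed compact_PiE_box closed_UN) auto
  moreover have "K \<noteq> {}"
  proof -
    obtain b0 where "b0 \<in> B" using \<open>B \<noteq> {}\<close> by blast
    then have "(\<lambda>v. if v = b0 then 1 else 0) \<in> K" unfolding K_def by auto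
    then show ?thesis by blast
  qed
  moreover have "continuous_on K (\<lambda>c. norm (L c))"
    unfolding L_def by (intro continuous_intros continuous_on_coordinate)
  ultimately obtain c0 where "c0 \<in> K" and c0_min: "\<And>c. c \<in> K \<Longrightarrow> norm (L c0) \<le> norm (L c)"
    using continuous_attains_inf[of K "\<lambda>c. norm (L c)"] by auto
  have "norm (L c0) > 0"
  proof (rule ccontr)
    assume "\<not> norm (L c0) > 0"
    then have "\<forall>b\<in>B. c0 b = 0"
      using assms unfolding L_def independent_explicit_module by auto
    with \<open>c0 \<in> K\<close> show False unfolding K_def by auto
  qed
  moreover have "norm (L c0) \<le> norm (\<Sum>v\<in>B. c v *\<^sub>R v)"
    if "\<forall>v\<in>B. \<bar>c v\<bar> \<le> 1" "\<exists>v\<in>B. \<bar>c v\<bar> = 1" for c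
  proof -
    have "c v \<in> {-1..1}" if "v \<in> B" for v
      using that \<open>\<forall>v\<in>B. \<bar>c v\<bar> \<le> 1\<close> unfolding atLeastAtMost_iff by fastforce
    with that(2) have "(\<lambda>v. if v \<in> B then c v else 0) \<in> K"
      unfolding K_def by (auto simp: PiE_iff)
    then have "norm (L c0) \<le> norm (L (\<lambda>v. if v \<in> B then c v else 0))"
      by (rule c0_min)
    also have "L (\<lambda>v. if v \<in> B then c v else 0) = (\<Sum>v\<in>B. c v *\<^sub>R v)"
      unfolding L_def by (intro sum.cong) auto
    finally show ?thesis .
  qed
  ultimately show ?thesis using that by blast
qed

lemma independent_lincomb_norm_lower_bound:
  fixes B :: "'a::real_normed_vector set"
  assumes "finite B" "independent B"
  obtains \<delta> where "\<delta> > 0" "\<And>c b. b \<in> B \<Longrightarrow> \<delta> * \<bar>c b\<bar> \<le> norm (\<Sum>v\<in>B. c v *\<^sub>R v)"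
proof -
  obtain \<delta> where "\<delta> > 0" and \<delta>:
    "\<And>c. \<forall>v\<in>B. \<bar>c v\<bar> \<le> 1 \<Longrightarrow> \<exists>v\<in>B. \<bar>c v\<bar> = 1 \<Longrightarrow> \<delta> \<le> norm (\<Sum>v\<in>B. c v *\<^sub>R v)"
    using independent_lincomb_norm_ge_on_box_boundary[OF assms] by blast
  have "\<delta> * \<bar>c b\<bar> \<le> norm (\<Sum>v\<in>B. c v *\<^sub>R v)" if "b \<in> B" for c b
  proof -
    define \<mu> where "\<mu> = Max ((\<lambda>v. \<bar>c v\<bar>) ` B)"
    have c_le: "\<bar>c v\<bar> \<le> \<mu>" if "v \<in> B" for v
      unfolding \<mu>_def using assms(1) that by auto
    have "\<mu> \<in> (\<lambda>v. \<bar>c v\<bar>) ` B"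
      unfolding \<mu>_def using assms(1) \<open>b \<in> B\<close> by (intro Max_in) auto
    then obtain b1 where "b1 \<in> B" "\<bar>c b1\<bar> = \<mu>" by blast
    show ?thesis
    proof (cases "\<mu> = 0")
      case True
      then show ?thesis using c_le[OF \<open>b \<in> B\<close>] by simp
    next
      case False
      then have "\<mu> > 0" using \<open>\<bar>c b1\<bar> = \<mu>\<close> by auto
      then have "\<delta> \<le> norm (\<Sum>v\<in>B. (c v / \<mu>) *\<^sub>R v)"
        using c_le \<open>b1 \<in> B\<close> \<open>\<bar>c b1\<bar> = \<mu>\<close> by (intro \<delta>) (auto simp: abs_divide)
      also have "(\<Sum>v\<in>B. (c v / \<mu>) *\<^sub>R v) = (1 / \<mu>) *\<^sub>R (\<Sum>v\<in>B. c v *\<^sub>R v)"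
        unfolding scaleR_sum_right by (intro sum.cong) auto
      also have "norm \<dots> = norm (\<Sum>v\<in>B. c v *\<^sub>R v) / \<mu>"
        using \<open>\<mu> > 0\<close> by simp
      finally have "\<delta> * \<mu> \<le> norm (\<Sum>v\<in>B. c v *\<^sub>R v)"
        using \<open>\<mu> > 0\<close> by (simp add: field_simps)
      then show ?thesis
        using mult_left_mono[OF c_le[OF \<open>b \<in> B\<close>], of \<delta>] \<open>\<delta> > 0\<close> by linarith
    qed
  qed
  with \<open>\<delta> > 0\<close> show ?thesis using that by blast
qed

lemma compact_sphere_inter_span:
  fixes B :: "'a::real_normed_vector set"
  assumes "finite B"
  shows "compact (sphere 0 1 \<inter> span B)"
proof -
  obtain C where "C \<subseteq> B" "independent C" "B \<subseteq> span C"
    by (rule maximal_independent_subset)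
  then have span_C: "span B = span C" and finC: "finite C"
    using assms by (auto simp: span_eq intro: span_base finite_subset)
  obtain \<delta> where "\<delta> > 0" and \<delta>: "\<And>c b. b \<in> C \<Longrightarrow> \<delta> * \<bar>c b\<bar> \<le> norm (\<Sum>v\<in>C. c v *\<^sub>R v)"
    using independent_lincomb_norm_lower_bound[OF finC \<open>independent C\<close>] by blast
  define M where "M = 1 / \<delta>"
  define L where "L c = (\<Sum>v\<in>C. c v *\<^sub>R v)" for c :: "'a \<Rightarrow> real"
  define Box where "Box = PiE UNIV (\<lambda>i. if i \<in> C then {-M..M} else {0::real})"
  have "sphere 0 1 \<inter> span C = sphere 0 1 \<inter> L ` Box"
  proof (intro equalityI subsetI)
    fix x assume x: "x \<in> sphere 0 1 \<inter> span C"
    then obtain u where u: "x = (\<Sum>v\<in>C. u v *\<^sub>R v)"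
      using span_finite[OF finC] by auto
    define c where "c v = (if v \<in> C then u v else 0)" for v
    have "L c = x" unfolding L_def c_def u by (intro sum.cong) auto
    have "c b \<in> {-M..M}" if "b \<in> C" for b
    proof -
      have "\<delta> * \<bar>c b\<bar> \<le> 1" using \<delta>[OF that, of c] x \<open>L c = x\<close> unfolding L_def by simp
      then have "\<bar>c b\<bar> \<le> M"
        using \<open>\<delta> > 0\<close> unfolding M_def by (simp add: field_simps)
      then show ?thesis
        unfolding atLeastAtMost_iff by linarith
    qed
    then have "c \<in> Box"
      unfolding Box_def by (auto simp: c_def)
    with \<open>L c = x\<close> show "x \<in> sphere 0 1 \<inter> L ` Box" using x by blast
  next
    fix x assume "x \<in> sphere 0 1 \<inter> L ` Box"
    then show "x \<in> sphere 0 1 \<inter> span C"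
      unfolding L_def by (auto intro: span_sum span_scale span_base)
  qed
  moreover have "closed (sphere (0::'a) 1)"
    unfolding sphere_def by (intro closed_Collect_eq continuous_intros)
  moreover have "compact (L ` Box)"
    unfolding Box_def L_def
    by (intro compact_continuous_image continuous_intros continuous_on_coordinate compact_PiE_box)
  ultimately show ?thesis
    using span_C by (simp add: closed_Int_compact)
qed

section \<open>The minimax theorem for finite matrix games\<close>

definition prob_simplex :: "'i set \<Rightarrow> ('i \<Rightarrow> real) set" where
  "prob_simplex I = {p. (\<forall>i\<in>I. 0 \<le> p i) \<and> (\<forall>i. i \<notin> I \<longrightarrow> p i = 0) \<and> sum p I = 1}"

definition game_value :: "'i set \<Rightarrow> 'j set \<Rightarrow> ('i \<Rightarrow> 'j \<Rightarrow> real) \<Rightarrow> real \<Rightarrow> bool" where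
  "game_value R C A v \<longleftrightarrow>
     (\<exists>p\<in>prob_simplex R. \<forall>j\<in>C. v \<le> (\<Sum>i\<in>R. p i * A i j)) \<and>
     (\<exists>q\<in>prob_simplex C. \<forall>i\<in>R. (\<Sum>j\<in>C. q j * A i j) \<le> v)"

lemma game_value_transpose:
  "game_value C R (\<lambda>j i. - A i j) (- v) \<longleftrightarrow> game_value R C A v"
  unfolding game_value_def by (auto simp: sum_negf)

lemma compact_prob_simplex:
  assumes "finite I"
  shows "compact (prob_simplex I)"
proof -
  have "prob_simplex I = PiE UNIV (\<lambda>i. if i \<in> I then {0..1} else {0}) \<inter> {p. sum p I = 1}"
  proof (intro equalityI subsetI)
    fix p assume p: "p \<in> prob_simplex I"
    then have "p i \<le> 1" if "i \<in> I" for i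
      using member_le_sum[of i I p] that assms unfolding prob_simplex_def by auto
    with p show "p \<in> PiE UNIV (\<lambda>i. if i \<in> I then {0..1} else {0}) \<inter> {p. sum p I = 1}"
      unfolding prob_simplex_def by auto
  qed (auto simp: prob_simplex_def PiE_iff split: if_splits)
  moreover have "closed {p :: 'a \<Rightarrow> real. sum p I = 1}"
    by (intro closed_Collect_eq continuous_intros continuous_on_coordinate)
  ultimately show ?thesis
    by (simp add: compact_Int_closed compact_PiE_box)
qed

lemma continuous_on_Min_image:
  fixes f :: "'j \<Rightarrow> 'a::topological_space \<Rightarrow> real"
  assumes "finite C" "C \<noteq> {}" "\<And>j. j \<in> C \<Longrightarrow> continuous_on S (f j)"
  shows "continuous_on S (\<lambda>x. Min ((\<lambda>j. f j x) ` C))"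
  using assms
proof (induction C rule: finite_ne_induct)
  case (insert j C)
  then have "continuous_on S (\<lambda>x. min (f j x) (Min ((\<lambda>j. f j x) ` C)))"
    by (intro continuous_on_min) auto
  with insert show ?case by simp
qed simp

lemma maximin_attained:
  fixes A :: "'i \<Rightarrow> 'j \<Rightarrow> real"
  assumes "finite R" "R \<noteq> {}" "finite C" "C \<noteq> {}"
  obtains p v where "p \<in> prob_simplex R" "\<forall>j\<in>C. v \<le> (\<Sum>i\<in>R. p i * A i j)"
    "\<forall>p'\<in>prob_simplex R. \<exists>j\<in>C. (\<Sum>i\<in>R. p' i * A i j) \<le> v"
proof -
  define g where "g p = Min ((\<lambda>j. \<Sum>i\<in>R. p i * A i j) ` C)" for p :: "'i \<Rightarrow> real"
  have "continuous_on (prob_simplex R) g"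
    unfolding g_def using assms
    by (intro continuous_on_Min_image continuous_intros continuous_on_coordinate) auto
  moreover obtain i0 where "i0 \<in> R" using assms by blast
  then have "(\<lambda>i. if i = i0 then 1 else 0) \<in> prob_simplex R"
    using assms unfolding prob_simplex_def by auto
  ultimately obtain p where p: "p \<in> prob_simplex R" and p_max: "\<forall>p'\<in>prob_simplex R. g p' \<le> g p"
    using continuous_attains_sup[OF compact_prob_simplex[OF \<open>finite R\<close>]] by blast
  have "\<forall>j\<in>C. g p \<le> (\<Sum>i\<in>R. p i * A i j)"
    unfolding g_def using assms by auto
  moreover have "\<exists>j\<in>C. (\<Sum>i\<in>R. p' i * A i j) \<le> g p" if "p' \<in> prob_simplex R" for p'
  proof -
    have "g p' \<in> (\<lambda>j. \<Sum>i\<in>R. p' i * A i j) ` C"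
      unfolding g_def using assms by (intro Min_in) auto
    then show ?thesis using p_max that by force
  qed
  ultimately show ?thesis using that p by blast
qed

lemma mixed_strategy_strictly_above:
  fixes A :: "'i \<Rightarrow> 'j \<Rightarrow> real"
  assumes "p \<in> prob_simplex R" "p' \<in> prob_simplex R"
    and p_guar: "\<forall>j\<in>C. v \<le> (\<Sum>i\<in>R. p i * A i j)" and slack: "v < (\<Sum>i\<in>R. p i * A i j0)"
    and p'_guar: "\<forall>j\<in>C - {j0}. v < (\<Sum>i\<in>R. p' i * A i j)"
  obtains p'' where "p'' \<in> prob_simplex R" "\<forall>j\<in>C. v < (\<Sum>i\<in>R. p'' i * A i j)"
proof -
  define col where "col p j = (\<Sum>i\<in>R. p i * A i j)" for p j
  define mix where "mix t i = (1 - t) * p i + t * p' i" for t i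
  have col_mix: "col (mix t) j = (1 - t) * col p j + t * col p' j" for t j
    unfolding col_def mix_def by (simp add: distrib_right sum.distrib sum_distrib_left mult.assoc)
  \<comment> \<open>A small weight t on p' keeps column j0 above v by continuity.\<close>
  have "((\<lambda>t. col (mix t) j0) \<longlongrightarrow> col p j0) (at_right 0)"
    unfolding col_mix by (auto intro!: tendsto_eq_intros)
  then have "\<forall>\<^sub>F t in at_right 0. 0 < t \<and> t < 1 \<and> v < col (mix t) j0"
    using slack unfolding col_def
    by (intro eventually_conj eventually_at_right_less order_tendstoD(2)[OF tendsto_ident_at]
        order_tendstoD(1)) auto
  then obtain t where t: "0 < t" "t < 1" "v < col (mix t) j0"
    using eventually_happens'[OF trivial_limit_at_right_real] by blast
  have "v < col (mix t) j" if "j \<in> C" for j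
  proof (cases "j = j0")
    case False
    with that p_guar p'_guar have "v \<le> col p j" "v < col p' j"
      unfolding col_def by auto
    with t have "(1 - t) * v + t * v < (1 - t) * col p j + t * col p' j"
      by (intro add_le_less_mono mult_left_mono mult_strict_left_mono) auto
    then show ?thesis unfolding col_mix by (simp add: algebra_simps)
  qed (use t in simp)
  moreover have "mix t \<in> prob_simplex R"
    using assms(1,2) t unfolding prob_simplex_def mix_def
    by (auto simp: sum.distrib sum_distrib_left[symmetric])
  ultimately show ?thesis
    using that unfolding col_def by blast
qed

lemma game_value_of_slack_column:
  fixes A :: "'i \<Rightarrow> 'j \<Rightarrow> real"
  assumes "finite C" "j0 \<in> C" and p: "p \<in> prob_simplex R"
    and guarantee: "\<forall>j\<in>C. v \<le> (\<Sum>i\<in>R. p i * A i j)"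
    and slack: "v < (\<Sum>i\<in>R. p i * A i j0)"
    and maximin: "\<forall>p'\<in>prob_simplex R. \<exists>j\<in>C. (\<Sum>i\<in>R. p' i * A i j) \<le> v"
    and reduced: "C - {j0} \<noteq> {} \<Longrightarrow> \<exists>v'. game_value R (C - {j0}) A v'"
  shows "game_value R C A v"
proof -
  have "C - {j0} \<noteq> {}"
  proof
    assume "C - {j0} = {}"
    then have "C = {j0}" using \<open>j0 \<in> C\<close> by blast
    then show False using maximin p slack by auto
  qed
  then obtain v' p' q' where p': "p' \<in> prob_simplex R" "\<forall>j\<in>C - {j0}. v' \<le> (\<Sum>i\<in>R. p' i * A i j)"
    and q': "q' \<in> prob_simplex (C - {j0})" "\<forall>i\<in>R. (\<Sum>j\<in>C - {j0}. q' j * A i j) \<le> v'"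
    using reduced unfolding game_value_def by blast
  have "v' \<le> v"
  proof (rule ccontr)
    assume "\<not> v' \<le> v"
    with p' have "\<forall>j\<in>C - {j0}. v < (\<Sum>i\<in>R. p' i * A i j)" by force
    with p p'(1) guarantee slack obtain p'' where
      "p'' \<in> prob_simplex R" "\<forall>j\<in>C. v < (\<Sum>i\<in>R. p'' i * A i j)"
      by (rule mixed_strategy_strictly_above)
    with maximin show False by force
  qed
  have "q' j0 = 0" using q' unfolding prob_simplex_def by auto
  have "q' \<in> prob_simplex C"
    using q' \<open>q' j0 = 0\<close> sum.remove[OF \<open>finite C\<close> \<open>j0 \<in> C\<close>, of q']
    unfolding prob_simplex_def by auto
  moreover have "(\<Sum>j\<in>C. q' j * A i j) \<le> v" if "i \<in> R" for i
  proof -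
    have "(\<Sum>j\<in>C. q' j * A i j) = (\<Sum>j\<in>C - {j0}. q' j * A i j)"
      using \<open>q' j0 = 0\<close> sum.remove[OF \<open>finite C\<close> \<open>j0 \<in> C\<close>, of "\<lambda>j. q' j * A i j"] by simp
    then show ?thesis using q'(2) \<open>v' \<le> v\<close> that by force
  qed
  ultimately show ?thesis
    using p guarantee unfolding game_value_def by blast
qed

lemma equalizing_strategies_value_eq:
  fixes A :: "'i \<Rightarrow> 'j \<Rightarrow> real"
  assumes "p \<in> prob_simplex R" "q \<in> prob_simplex C"
    and "\<forall>j\<in>C. (\<Sum>i\<in>R. p i * A i j) = v" "\<forall>i\<in>R. (\<Sum>j\<in>C. q j * A i j) = v'"
  shows "v = v'"
proof -
  have "v = (\<Sum>j\<in>C. q j * v)"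
    using assms(2) unfolding prob_simplex_def by (simp flip: sum_distrib_right)
  also have "\<dots> = (\<Sum>j\<in>C. q j * (\<Sum>i\<in>R. p i * A i j))"
    using assms(3) by simp
  also have "\<dots> = (\<Sum>i\<in>R. p i * (\<Sum>j\<in>C. q j * A i j))"
    by (simp add: sum_distrib_left sum.swap[of _ C R] mult.left_commute)
  also have "\<dots> = (\<Sum>i\<in>R. p i * v')"
    using assms(4) by simp
  also have "\<dots> = v'"
    using assms(1) unfolding prob_simplex_def by (simp flip: sum_distrib_right)
  finally show ?thesis .
qed

theorem minimax_theorem:
  fixes A :: "'i \<Rightarrow> 'i \<Rightarrow> real"
  assumes "finite R" "R \<noteq> {}" "finite C" "C \<noteq> {}"
  shows "\<exists>v. game_value R C A v"
  using assms
proof (induction "card R + card C" arbitrary: R C A rule: less_induct)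
  case less
  have IH_column: "\<exists>v'. game_value R (C - {j}) A v'" if "j \<in> C" "C - {j} \<noteq> {}" for j
    using less.hyps[of R "C - {j}"] card_Diff1_less[OF \<open>finite C\<close> that(1)] less.prems that(2)
    by auto
  have IH_row: "\<exists>v'. game_value C (R - {i}) (\<lambda>j i. - A i j) v'" if "i \<in> R" "R - {i} \<noteq> {}" for i
    using less.hyps[of C "R - {i}"] card_Diff1_less[OF \<open>finite R\<close> that(1)] less.prems that(2)
    by auto
  obtain p v where p: "p \<in> prob_simplex R" and p_guar: "\<forall>j\<in>C. v \<le> (\<Sum>i\<in>R. p i * A i j)"
    and maximin: "\<forall>p'\<in>prob_simplex R. \<exists>j\<in>C. (\<Sum>i\<in>R. p' i * A i j) \<le> v"
    using maximin_attained[OF less.prems] .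
  obtain q w where q: "q \<in> prob_simplex C" and q_guar: "\<forall>i\<in>R. w \<le> (\<Sum>j\<in>C. q j * - A i j)"
    and minimax: "\<forall>q'\<in>prob_simplex C. \<exists>i\<in>R. (\<Sum>j\<in>C. q' j * - A i j) \<le> w"
    using maximin_attained[of C R "\<lambda>j i. - A i j"] less.prems by blast
  consider (slack_column) j0 where "j0 \<in> C" "v < (\<Sum>i\<in>R. p i * A i j0)"
    | (slack_row) i0 where "i0 \<in> R" "w < (\<Sum>j\<in>C. q j * - A i0 j)"
    | (tight) "\<forall>j\<in>C. (\<Sum>i\<in>R. p i * A i j) = v" "\<forall>i\<in>R. (\<Sum>j\<in>C. q j * - A i j) = w"
    using p_guar q_guar by force
  then show ?case
  proof cases
    case slack_column
    then have "game_value R C A v"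
      using IH_column by (intro game_value_of_slack_column[OF \<open>finite C\<close> _ p p_guar _ maximin])
    then show ?thesis ..
  next
    case slack_row
    then have "game_value C R (\<lambda>j i. - A i j) w"
      using IH_row by (intro game_value_of_slack_column[OF \<open>finite R\<close> _ q q_guar _ minimax])
    then have "game_value R C A (- w)"
      using game_value_transpose[of C R A "- w"] by simp
    then show ?thesis ..
  next
    case tight
    then have "\<forall>i\<in>R. (\<Sum>j\<in>C. q j * A i j) = - w"
      by (auto simp: sum_negf)
    with tight(1) have "v = - w"
      by (rule equalizing_strategies_value_eq[OF p q])
    with tight have "game_value R C A v"
      unfolding game_value_def by (intro conjI bexI[OF _ p] bexI[OF _ q]) (auto simp: sum_negf)
    then show ?thesis ..
  qed
qed

lemma weighted_dist_le_add_norm: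
  assumes "finite I" "p \<in> prob_simplex I"
  shows "(\<Sum>i\<in>I. p i * norm (x - z i)) \<le> (\<Sum>i\<in>I. p i * norm (y - z i)) + norm (x - y)"
proof -
  have "(\<Sum>i\<in>I. p i * norm (x - z i)) \<le> (\<Sum>i\<in>I. p i * norm (y - z i) + p i * norm (x - y))"
  proof (intro sum_mono)
    fix i assume "i \<in> I"
    then have "p i * norm (x - z i) \<le> p i * (norm (y - z i) + norm (x - y))"
      using assms(2) norm_triangle_ineq[of "y - z i" "x - y"] unfolding prob_simplex_def
      by (intro mult_left_mono) auto
    then show "p i * norm (x - z i) \<le> p i * norm (y - z i) + p i * norm (x - y)"
      by (simp add: distrib_left)
  qed
  also have "\<dots> = (\<Sum>i\<in>I. p i * norm (y - z i)) + norm (x - y)"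
    using assms(2) unfolding prob_simplex_def by (simp add: sum.distrib flip: sum_distrib_right)
  finally show ?thesis .
qed

section \<open>Empirical approximation of probability vectors\<close>

lemma sequence_with_multiplicities:
  fixes z :: "nat \<Rightarrow> 'a" and c :: "nat \<Rightarrow> nat"
  obtains w where "\<forall>j<(\<Sum>i<k. c i). \<exists>i<k. w j = z i"
    "\<And>g :: 'a \<Rightarrow> real. (\<Sum>j<(\<Sum>i<k. c i). g (w j)) = (\<Sum>i<k. real (c i) * g (z i))"
proof -
  have "\<exists>w. (\<forall>j<(\<Sum>i<k. c i). \<exists>i<k. w j = z i) \<and>
          (\<forall>g :: 'a \<Rightarrow> real. (\<Sum>j<(\<Sum>i<k. c i). g (w j)) = (\<Sum>i<k. real (c i) * g (z i)))"
  proof (induction k)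
    case (Suc k)
    define n where "n = (\<Sum>i<k. c i)"
    obtain w where w_in: "\<forall>j<n. \<exists>i<k. w j = z i"
      and w_sum: "\<And>g :: 'a \<Rightarrow> real. (\<Sum>j<n. g (w j)) = (\<Sum>i<k. real (c i) * g (z i))"
      using Suc.IH unfolding n_def by blast
    define w' where "w' j = (if j < n then w j else z k)" for j
    have "(\<Sum>j<n + c k. g (w' j)) = (\<Sum>i<Suc k. real (c i) * g (z i))" for g :: "'a \<Rightarrow> real"
    proof -
      have "(\<Sum>j<n + c k. g (w' j)) = (\<Sum>j<n. g (w' j)) + (\<Sum>j\<in>{n..<n + c k}. g (w' j))"
        unfolding lessThan_atLeast0 by (rule sum.atLeastLessThan_concat[symmetric]) auto
      also have "(\<Sum>j<n. g (w' j)) = (\<Sum>j<n. g (w j))"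
        unfolding w'_def by simp
      also have "(\<Sum>j\<in>{n..<n + c k}. g (w' j)) = real (c k) * g (z k)"
        unfolding w'_def by simp
      finally show ?thesis using w_sum by simp
    qed
    moreover have "\<forall>j<n + c k. \<exists>i<Suc k. w' j = z i"
      using w_in unfolding w'_def by (metis less_Suc_eq)
    ultimately show ?case unfolding n_def by auto
  qed simp
  then show ?thesis using that by blast
qed

lemma apportionment:
  fixes p :: "nat \<Rightarrow> real"
  assumes "k > 0" "\<forall>i<k. 0 \<le> p i" "(\<Sum>i<k. p i) = 1"
  obtains c :: "nat \<Rightarrow> nat"
  where "(\<Sum>i<k. c i) = M" "(\<Sum>i<k. \<bar>real (c i) - p i * M\<bar>) \<le> 2 * k"
proof -
  define c0 where "c0 i = nat \<lfloor>p i * M\<rfloor>" for i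
  have c0_le: "real (c0 i) \<le> p i * M" and c0_gt: "p i * M - 1 < real (c0 i)" if "i < k" for i
    using assms(2) that unfolding c0_def by auto
  have "(\<Sum>i<k. real (c0 i)) \<le> (\<Sum>i<k. p i * M)"
    using c0_le by (intro sum_mono) auto
  also have "\<dots> = M"
    using assms(3) by (simp flip: sum_distrib_right)
  finally have c0_sum_le: "(\<Sum>i<k. c0 i) \<le> M"
    by (simp flip: of_nat_sum)
  define L where "L = M - (\<Sum>i<k. c0 i)"
  have "real L = (\<Sum>i<k. p i * M - real (c0 i))"
    using c0_sum_le assms(3) unfolding L_def
    by (simp add: of_nat_diff sum_subtractf flip: sum_distrib_right)
  also have "\<dots> \<le> (\<Sum>i<k. 1)"
    using c0_gt by (intro sum_mono) (simp add: less_imp_le algebra_simps)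
  finally have "real L \<le> k" by simp
  define c where "c i = c0 i + (if i = 0 then L else 0)" for i
  have "(\<Sum>i<k. c i) = (\<Sum>i<k. c0 i) + L"
    using \<open>k > 0\<close> unfolding c_def by (simp add: sum.distrib)
  then have "(\<Sum>i<k. c i) = M"
    using c0_sum_le unfolding L_def by simp
  moreover have "(\<Sum>i<k. \<bar>real (c i) - p i * M\<bar>) \<le> (\<Sum>i<k. 1 + (if i = 0 then real L else 0))"
  proof (intro sum_mono)
    fix i assume "i \<in> {..<k}"
    then show "\<bar>real (c i) - p i * M\<bar> \<le> 1 + (if i = 0 then real L else 0)"
      using c0_le[of i] c0_gt[of i] unfolding c_def by auto
  qed
  moreover have "(\<Sum>i<k. 1 + (if i = 0 then real L else 0)) = k + real L"
    using \<open>k > 0\<close> by (simp add: sum.distrib)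
  ultimately show ?thesis
    using that \<open>real L \<le> k\<close> by fastforce
qed

lemma empirical_approximation:
  fixes z :: "nat \<Rightarrow> 'a" and p :: "nat \<Rightarrow> real"
  assumes "k > 0" "\<forall>i<k. 0 \<le> p i" "(\<Sum>i<k. p i) = 1" "\<eta> > 0"
  obtains m :: nat and w :: "nat \<Rightarrow> 'a" where "m \<ge> 1" "\<forall>j<m. \<exists>i<k. w j = z i"
    "\<And>g. (\<forall>i<k. \<bar>g (z i)\<bar> \<le> B) \<Longrightarrow>
      \<bar>(\<Sum>j<m. g (w j)) / real m - (\<Sum>i<k. p i * g (z i))\<bar> \<le> \<eta>"
proof -
  obtain n :: nat where "2 * k * B / \<eta> < n"
    using reals_Archimedean2 by blast
  define M where "M = Suc n"
  have "2 * k * B \<le> \<eta> * M"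
    using \<open>2 * k * B / \<eta> < n\<close> \<open>\<eta> > 0\<close> unfolding M_def
    by (simp add: pos_divide_less_eq algebra_simps)
  obtain c where c_sum: "(\<Sum>i<k. c i) = M" and c_err: "(\<Sum>i<k. \<bar>real (c i) - p i * M\<bar>) \<le> 2 * k"
    using apportionment[OF assms(1-3)] by blast
  obtain w where w_in: "\<forall>j<M. \<exists>i<k. w j = z i"
    and w_sum: "\<And>g :: 'a \<Rightarrow> real. (\<Sum>j<M. g (w j)) = (\<Sum>i<k. real (c i) * g (z i))"
    using sequence_with_multiplicities[where k = k and c = c and z = z] unfolding c_sum by blast
  have "\<bar>(\<Sum>j<M. g (w j)) / M - (\<Sum>i<k. p i * g (z i))\<bar> \<le> \<eta>"
    if g: "\<forall>i<k. \<bar>g (z i)\<bar> \<le> B" for g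
  proof -
    have "(\<Sum>j<M. g (w j)) / M - (\<Sum>i<k. p i * g (z i)) = (\<Sum>i<k. (real (c i) - p i * M) * g (z i)) / M"
      unfolding w_sum using \<open>M = Suc n\<close>
      by (simp add: field_simps sum_subtractf sum_distrib_left sum_divide_distrib)
    also have "\<bar>\<dots>\<bar> \<le> (\<Sum>i<k. \<bar>real (c i) - p i * M\<bar> * B) / M"
    proof -
      have "\<bar>\<Sum>i<k. (real (c i) - p i * M) * g (z i)\<bar> \<le> (\<Sum>i<k. \<bar>real (c i) - p i * M\<bar> * B)"
        using g by (intro order_trans[OF sum_abs] sum_mono) (auto simp: abs_mult intro: mult_left_mono)
      then show ?thesis
        by (simp add: abs_divide divide_right_mono)
    qed
    also have "\<dots> \<le> 2 * k * B / M"
    proof -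
      have "0 \<le> B" using g \<open>k > 0\<close> by (meson abs_ge_zero order_trans)
      with c_err show ?thesis
        by (intro divide_right_mono) (auto simp flip: sum_distrib_right intro: mult_right_mono)
    qed
    also have "\<dots> \<le> \<eta>"
      using \<open>2 * k * B \<le> \<eta> * M\<close> unfolding M_def by (simp add: divide_le_eq)
    finally show ?thesis .
  qed
  then show ?thesis
    using that[of M w] w_in unfolding M_def by simp
qed

section \<open>Rendezvous numbers of compact sets\<close>

lemma closure_convex_hull_real_eq:
  fixes T :: "real set"
  assumes "T \<noteq> {}" "bounded T"
  shows "closure (convex hull T) = {Inf T..Sup T}"
proof
  have bdd: "bdd_above T" "bdd_below T"
    using assms(2) by (auto simp: bounded_imp_bdd_above bounded_imp_bdd_below)
  then have "T \<subseteq> {Inf T..Sup T}"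
    by (auto intro: cInf_lower cSup_upper)
  then show "closure (convex hull T) \<subseteq> {Inf T..Sup T}"
    by (intro closure_minimal hull_minimal) auto
  have "closure T \<subseteq> closure (convex hull T)"
    by (intro closure_mono hull_subset)
  then have "Inf T \<in> closure (convex hull T)" "Sup T \<in> closure (convex hull T)"
    using closure_contains_Inf[OF assms(1) bdd(2)] closure_contains_Sup[OF assms(1) bdd(1)] by auto
  moreover have "convex (closure (convex hull T))"
    by (simp add: convex_closure)
  ultimately have "closed_segment (Inf T) (Sup T) \<subseteq> closure (convex hull T)"
    unfolding convex_contains_segment by blast
  moreover have "Inf T \<le> Sup T"
    using assms(1) bdd by (simp add: cInf_le_cSup)
  ultimately show "{Inf T..Sup T} \<subseteq> closure (convex hull T)"
    by (simp add: closed_segment_eq_real_ivl)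
qed

lemma cSup_image_le_cInf_image_add:
  fixes f g :: "'a \<Rightarrow> real"
  assumes "S \<noteq> {}" "\<And>x y. x \<in> S \<Longrightarrow> y \<in> S \<Longrightarrow> f y \<le> g x + e"
  shows "Sup (f ` S) \<le> Inf (g ` S) + e"
proof -
  have "f y - e \<le> Inf (g ` S)" if "y \<in> S" for y
    using assms that by (intro cInf_greatest) (auto simp: algebra_simps)
  then show ?thesis
    using assms(1) by (intro cSup_least) (auto simp: algebra_simps)
qed

lemma compact_finite_net:
  fixes S :: "'a::metric_space set"
  assumes "compact S" "S \<noteq> {}" "\<eta> > 0"
  obtains k and z :: "nat \<Rightarrow> 'a"
  where "k > 0" "\<forall>i<k. z i \<in> S" "\<And>x. x \<in> S \<Longrightarrow> \<exists>i<k. dist x (z i) < \<eta>"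
proof -
  obtain N where N: "finite N" "N \<subseteq> S" "S \<subseteq> (\<Union>x\<in>N. ball x \<eta>)"
    using seq_compact_imp_totally_bounded[OF compact_imp_seq_compact[OF assms(1)], rule_format, OF assms(3)]
    by blast
  obtain k :: nat and z where k: "N = z ` {i. i < k}"
    using finite_imp_nat_seg_image_inj_on[OF N(1)] by blast
  have "k > 0"
  proof (rule ccontr)
    assume "\<not> k > 0"
    then have "N = {}" using k by simp
    with N(3) assms(2) show False by auto
  qed
  moreover have "\<exists>i<k. dist x (z i) < \<eta>" if "x \<in> S" for x
  proof -
    obtain n where "n \<in> N" "dist n x < \<eta>" using N(3) \<open>x \<in> S\<close> by auto
    then show ?thesis using k by (auto simp: dist_commute)
  qed
  moreover have "\<forall>i<k. z i \<in> S"
    using N(2) k by auto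
  ultimately show ?thesis
    using that by blast
qed

definition avg_dist :: "nat \<Rightarrow> (nat \<Rightarrow> 'a::real_normed_vector) \<Rightarrow> 'a \<Rightarrow> real" where
  "avg_dist m w x = (\<Sum>j<m. norm (x - w j)) / real m"

lemma mem_R_set_iff:
  "y \<in> R_set S \<longleftrightarrow>
     (\<forall>m w. 1 \<le> m \<longrightarrow> (\<forall>j<m. w j \<in> S) \<longrightarrow> y \<in> closure (convex hull (avg_dist m w ` S)))"
  unfolding R_set_def avg_dist_def by auto

lemma avg_dist_nonneg: "0 \<le> avg_dist m w x"
  unfolding avg_dist_def by (simp add: sum_nonneg)

lemma avg_dist_le_add_norm: "avg_dist m w x \<le> avg_dist m w y + norm (x - y)"
proof (cases "m = 0")
  case False
  have "(\<Sum>j<m. norm (x - w j)) \<le> (\<Sum>j<m. norm (y - w j) + norm (x - y))"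
    using norm_triangle_ineq[of "y - w _" "x - y"] by (intro sum_mono) simp
  with False show ?thesis
    unfolding avg_dist_def by (simp add: sum.distrib field_simps)
qed (simp add: avg_dist_def)

lemma avg_dist_perturb:
  assumes "1 \<le> m" "\<forall>j<m. norm (u j - w j) \<le> \<delta>"
  shows "\<bar>avg_dist m u x - avg_dist m w x\<bar> \<le> \<delta>"
proof -
  have "\<bar>(\<Sum>j<m. norm (x - u j)) - (\<Sum>j<m. norm (x - w j))\<bar> \<le> (\<Sum>j<m. \<delta>)"
    unfolding sum_subtractf[symmetric]
  proof (intro order_trans[OF sum_abs] sum_mono)
    fix j assume "j \<in> {..<m}"
    then show "\<bar>norm (x - u j) - norm (x - w j)\<bar> \<le> \<delta>"
      using assms(2) norm_triangle_ineq3[of "x - u j" "x - w j"] by (force simp: norm_minus_commute)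
  qed
  with assms(1) show ?thesis
    unfolding avg_dist_def by (simp add: abs_divide field_simps flip: diff_divide_distrib)
qed

lemma bounded_avg_dist_image:
  assumes "bounded S"
  shows "bounded (avg_dist m w ` S)"
proof -
  obtain K where K: "\<And>x. x \<in> S \<Longrightarrow> norm x \<le> K"
    using assms unfolding bounded_iff by blast
  have "norm (avg_dist m w x) \<le> avg_dist m w 0 + K" if "x \<in> S" for x
    using avg_dist_le_add_norm[of m w x 0] avg_dist_nonneg[of m w x] K[OF that] by simp
  then show ?thesis
    unfolding bounded_iff by blast
qed

lemma mean_avg_dist_swap:
  "(\<Sum>i<m'. avg_dist m w (u i)) / real m' = (\<Sum>j<m. avg_dist m' u (w j)) / real m"
proof -
  have "(\<Sum>i<m'. avg_dist m w (u i)) / real m' = (\<Sum>i<m'. \<Sum>j<m. norm (u i - w j)) / (real m * real m')"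
    unfolding avg_dist_def by (simp add: sum_divide_distrib)
  also have "\<dots> = (\<Sum>j<m. \<Sum>i<m'. norm (w j - u i)) / (real m' * real m)"
    by (subst sum.swap) (simp add: norm_minus_commute mult.commute)
  also have "\<dots> = (\<Sum>j<m. avg_dist m' u (w j)) / real m"
    unfolding avg_dist_def by (simp add: sum_divide_distrib)
  finally show ?thesis .
qed

lemma Inf_avg_dist_le_Sup:
  assumes "bounded S" "1 \<le> m" "\<forall>j<m. w j \<in> S" "1 \<le> m'" "\<forall>i<m'. u i \<in> S"
  shows "Inf (avg_dist m w ` S) \<le> Sup (avg_dist m' u ` S)"
proof -
  have bdd: "bdd_below (avg_dist m w ` S)" "bdd_above (avg_dist m' u ` S)"
    using bounded_avg_dist_image[OF assms(1)] by (auto simp: bounded_imp_bdd_above bounded_imp_bdd_below)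
  have "(\<Sum>i<m'. Inf (avg_dist m w ` S)) \<le> (\<Sum>i<m'. avg_dist m w (u i))"
    using assms(5) bdd by (intro sum_mono cInf_lower) auto
  then have "Inf (avg_dist m w ` S) \<le> (\<Sum>i<m'. avg_dist m w (u i)) / real m'"
    using assms(4) by (simp add: field_simps)
  also have "\<dots> = (\<Sum>j<m. avg_dist m' u (w j)) / real m"
    by (rule mean_avg_dist_swap)
  also have "\<dots> \<le> Sup (avg_dist m' u ` S)"
  proof -
    have "(\<Sum>j<m. avg_dist m' u (w j)) \<le> (\<Sum>j<m. Sup (avg_dist m' u ` S))"
      using assms(3) bdd by (intro sum_mono cSup_upper) auto
    then show ?thesis
      using assms(2) by (simp add: field_simps)
  qed
  finally show ?thesis .
qed

lemma avg_dist_approx_mixture: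
  fixes S :: "'a::real_normed_vector set" and z :: "nat \<Rightarrow> 'a"
  assumes "bounded S" "k > 0" "\<forall>i<k. z i \<in> S" "p \<in> prob_simplex {..<k}" "\<eta> > 0"
  obtains m :: nat and w :: "nat \<Rightarrow> 'a" where "1 \<le> m" "\<forall>j<m. w j \<in> S"
    "\<And>x. x \<in> S \<Longrightarrow> \<bar>avg_dist m w x - (\<Sum>i<k. p i * norm (x - z i))\<bar> \<le> \<eta>"
proof -
  have D: "\<forall>i<k. \<bar>norm (x - z i)\<bar> \<le> diameter S" if "x \<in> S" for x
    using diameter_bounded_bound[OF assms(1) that] assms(3) unfolding dist_norm by auto
  obtain m w where "1 \<le> m" and w_in: "\<forall>j<m. \<exists>i<k. w j = z i"
    and w_approx: "\<And>g. \<forall>i<k. \<bar>g (z i)\<bar> \<le> diameter S \<Longrightarrow>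
      \<bar>(\<Sum>j<m. g (w j)) / real m - (\<Sum>i<k. p i * g (z i))\<bar> \<le> \<eta>"
    using empirical_approximation[of k p \<eta> z "diameter S"] assms(2,4,5)
    unfolding prob_simplex_def by auto
  show ?thesis
  proof (rule that[OF \<open>1 \<le> m\<close>])
    show "\<forall>j<m. w j \<in> S"
    proof (intro allI impI)
      fix j assume "j < m"
      then obtain i where "i < k" "w j = z i" using w_in by blast
      then show "w j \<in> S" using assms(3) by simp
    qed
    show "\<bar>avg_dist m w x - (\<Sum>i<k. p i * norm (x - z i))\<bar> \<le> \<eta>" if "x \<in> S" for x
      using w_approx[of "\<lambda>s. norm (x - s)", OF D[OF that]] unfolding avg_dist_def by simp
  qed
qed

lemma avg_dist_minimax_gap:
  fixes S :: "'a::real_normed_vector set"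
  assumes "compact S" "S \<noteq> {}" "e > 0"
  obtains m w m' u where "1 \<le> m" "\<forall>j<m. w j \<in> S" "1 \<le> m'" "\<forall>j<m'. u j \<in> S"
    "\<And>x y. x \<in> S \<Longrightarrow> y \<in> S \<Longrightarrow> avg_dist m' u y \<le> avg_dist m w x + e"
proof -
  define \<eta> where "\<eta> = e / 4"
  have "\<eta> > 0" using assms(3) unfolding \<eta>_def by simp
  have "bounded S" using assms(1) by (rule compact_imp_bounded)
  obtain k and z :: "nat \<Rightarrow> 'a" where "k > 0" and z_in: "\<forall>i<k. z i \<in> S"
    and z_net: "\<And>x. x \<in> S \<Longrightarrow> \<exists>i<k. dist x (z i) < \<eta>"
    using compact_finite_net[OF assms(1,2) \<open>\<eta> > 0\<close>] by blast
  have "\<exists>v. game_value {..<k} {..<k} (\<lambda>i j. norm (z i - z j)) v"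
    using \<open>k > 0\<close> by (intro minimax_theorem) auto
  then obtain v p q where p: "p \<in> prob_simplex {..<k}" "\<forall>j<k. v \<le> (\<Sum>i<k. p i * norm (z i - z j))"
    and q: "q \<in> prob_simplex {..<k}" "\<forall>i<k. (\<Sum>j<k. q j * norm (z i - z j)) \<le> v"
    unfolding game_value_def Ball_def lessThan_iff by blast
  obtain m w where "1 \<le> m" "\<forall>j<m. w j \<in> S"
    and w: "\<And>x. x \<in> S \<Longrightarrow> \<bar>avg_dist m w x - (\<Sum>i<k. p i * norm (x - z i))\<bar> \<le> \<eta>"
    using avg_dist_approx_mixture[OF \<open>bounded S\<close> \<open>k > 0\<close> z_in p(1) \<open>\<eta> > 0\<close>] by blast
  obtain m' u where "1 \<le> m'" "\<forall>j<m'. u j \<in> S"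
    and u: "\<And>y. y \<in> S \<Longrightarrow> \<bar>avg_dist m' u y - (\<Sum>j<k. q j * norm (y - z j))\<bar> \<le> \<eta>"
    using avg_dist_approx_mixture[OF \<open>bounded S\<close> \<open>k > 0\<close> z_in q(1) \<open>\<eta> > 0\<close>] by blast
  have lower: "v - \<eta> \<le> (\<Sum>i<k. p i * norm (x - z i))" if "x \<in> S" for x
  proof -
    obtain i0 where "i0 < k" "dist x (z i0) < \<eta>" using z_net[OF \<open>x \<in> S\<close>] by blast
    then have "v \<le> (\<Sum>i<k. p i * norm (z i - z i0))" using p(2) by blast
    also have "\<dots> = (\<Sum>i<k. p i * norm (z i0 - z i))" by (simp add: norm_minus_commute)
    also have "\<dots> \<le> (\<Sum>i<k. p i * norm (x - z i)) + norm (z i0 - x)"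
      using weighted_dist_le_add_norm[OF _ p(1)] by blast
    finally show ?thesis
      using \<open>dist x (z i0) < \<eta>\<close> by (simp add: dist_norm norm_minus_commute)
  qed
  have upper: "(\<Sum>j<k. q j * norm (y - z j)) \<le> v + \<eta>" if "y \<in> S" for y
  proof -
    obtain i1 where "i1 < k" "dist y (z i1) < \<eta>" using z_net[OF \<open>y \<in> S\<close>] by blast
    have "(\<Sum>j<k. q j * norm (y - z j)) \<le> (\<Sum>j<k. q j * norm (z i1 - z j)) + norm (y - z i1)"
      using weighted_dist_le_add_norm[OF _ q(1)] by simp
    also have "\<dots> \<le> v + \<eta>"
      using q(2)[rule_format, OF \<open>i1 < k\<close>] \<open>dist y (z i1) < \<eta>\<close> by (simp add: dist_norm)
    finally show ?thesis .
  qed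
  have "avg_dist m' u y \<le> avg_dist m w x + e" if "x \<in> S" "y \<in> S" for x y
    using lower[OF that(1)] upper[OF that(2)] w[OF that(1)] u[OF that(2)]
    unfolding abs_le_iff \<eta>_def by linarith
  with \<open>1 \<le> m\<close> \<open>\<forall>j<m. w j \<in> S\<close> \<open>1 \<le> m'\<close> \<open>\<forall>j<m'. u j \<in> S\<close> show ?thesis
    using that by blast
qed

lemma mem_R_set_iff_bounds:
  fixes S :: "'a::real_normed_vector set"
  assumes "bounded S" "S \<noteq> {}"
  shows "y \<in> R_set S \<longleftrightarrow> (\<forall>m w. 1 \<le> m \<longrightarrow> (\<forall>j<m. w j \<in> S) \<longrightarrow>
           Inf (avg_dist m w ` S) \<le> y \<and> y \<le> Sup (avg_dist m w ` S))"
proof -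
  have "closure (convex hull (avg_dist m w ` S)) = {Inf (avg_dist m w ` S)..Sup (avg_dist m w ` S)}"
    for m w
    using assms by (intro closure_convex_hull_real_eq bounded_avg_dist_image) auto
  then show ?thesis
    unfolding mem_R_set_iff by simp
qed

lemma Sup_Inf_avg_dist_mem_R_set:
  fixes S :: "'a::real_normed_vector set"
  assumes "bounded S" "S \<noteq> {}"
  shows "Sup {Inf (avg_dist m w ` S) | m w. 1 \<le> m \<and> (\<forall>j<m. w j \<in> S)} \<in> R_set S"
    (is "Sup ?L \<in> _")
proof -
  obtain s0 where "s0 \<in> S" using assms(2) by blast
  have "bdd_above ?L"
    using Inf_avg_dist_le_Sup[OF assms(1), where m' = 1 and u = "\<lambda>_. s0"] \<open>s0 \<in> S\<close>
    by (intro bdd_aboveI) auto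
  have "Inf (avg_dist 1 (\<lambda>_. s0) ` S) \<in> ?L"
    using \<open>s0 \<in> S\<close> by auto
  then have "?L \<noteq> {}" by blast
  show ?thesis
    unfolding mem_R_set_iff_bounds[OF assms]
  proof (intro allI impI conjI)
    fix m :: nat and w assume "1 \<le> m" "\<forall>j<m. w j \<in> S"
    then show "Inf (avg_dist m w ` S) \<le> Sup ?L"
      using \<open>bdd_above ?L\<close> by (intro cSup_upper) auto
    show "Sup ?L \<le> Sup (avg_dist m w ` S)"
      using \<open>?L \<noteq> {}\<close> Inf_avg_dist_le_Sup[OF assms(1) _ _ \<open>1 \<le> m\<close> \<open>\<forall>j<m. w j \<in> S\<close>]
      by (intro cSup_least) auto
  qed
qed

lemma R_set_subsingleton:
  fixes S :: "'a::real_normed_vector set"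
  assumes "compact S" "S \<noteq> {}" "y \<in> R_set S" "y' \<in> R_set S"
  shows "y = y'"
proof -
  have "bounded S" using assms(1) by (rule compact_imp_bounded)
  have "\<bar>y - y'\<bar> \<le> 0 + e" if "e > 0" for e
  proof -
    obtain m w m' u where "1 \<le> m" "\<forall>j<m. w j \<in> S" "1 \<le> m'" "\<forall>j<m'. u j \<in> S"
      and gap: "\<And>x y. x \<in> S \<Longrightarrow> y \<in> S \<Longrightarrow> avg_dist m' u y \<le> avg_dist m w x + e"
      using avg_dist_minimax_gap[OF assms(1,2) \<open>e > 0\<close>] by metis
    then have gap_Sup_Inf: "Sup (avg_dist m' u ` S) \<le> Inf (avg_dist m w ` S) + e"
      using assms(2) by (intro cSup_image_le_cInf_image_add)
    have bounds: "Inf (avg_dist m w ` S) \<le> z \<and> z \<le> Sup (avg_dist m' u ` S)" if "z \<in> R_set S" for z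
      using that \<open>1 \<le> m\<close> \<open>\<forall>j<m. w j \<in> S\<close> \<open>1 \<le> m'\<close> \<open>\<forall>j<m'. u j \<in> S\<close>
      unfolding mem_R_set_iff_bounds[OF \<open>bounded S\<close> assms(2)] by blast
    show ?thesis
      using gap_Sup_Inf bounds[OF assms(3)] bounds[OF assms(4)] unfolding abs_le_iff by linarith
  qed
  then have "\<bar>y - y'\<bar> \<le> 0"
    by (rule field_le_epsilon)
  then show ?thesis by simp
qed

theorem R_set_singleton:
  fixes S :: "'a::real_normed_vector set"
  assumes "compact S" "S \<noteq> {}"
  shows "\<exists>r. R_set S = {r}"
  using Sup_Inf_avg_dist_mem_R_set[OF compact_imp_bounded[OF assms(1)] assms(2)]
    R_set_subsingleton[OF assms]
  by blast

corollary r_num_mem_R_set: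
  fixes S :: "'a::real_normed_vector set"
  assumes "compact S" "S \<noteq> {}"
  shows "r_num S \<in> R_set S"
proof -
  obtain r where "R_set S = {r}"
    using R_set_singleton[OF assms] by blast
  moreover from this have "r_num S = r"
    unfolding r_num_def by simp
  ultimately show ?thesis by simp
qed

section \<open>Approximation from finite-dimensional subspaces\<close>

lemma norm_normalize_diff_le:
  fixes w y :: "'a::real_normed_vector"
  assumes "norm w = 1"
  shows "norm (y /\<^sub>R norm y - w) \<le> 2 * norm (y - w)"
proof (cases "y = 0")
  case False
  have "y /\<^sub>R norm y - y = (1 / norm y - 1) *\<^sub>R y"
    by (simp add: scaleR_diff_left divide_inverse)
  then have "norm (y /\<^sub>R norm y - y) = \<bar>1 / norm y - 1\<bar> * norm y"
    by simp
  also have "\<dots> = \<bar>norm w - norm y\<bar>"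
    using False assms by (simp add: abs_mult[symmetric] algebra_simps divide_simps abs_minus_commute)
  also have "\<dots> \<le> norm (y - w)"
    using norm_triangle_ineq3[of w y] by (simp add: norm_minus_commute)
  finally show ?thesis
    using norm_triangle_ineq[of "y /\<^sub>R norm y - y" "y - w"] by simp
qed (use assms in simp)

lemma approx_unit_vectors_in_subspaces:
  fixes X :: "nat \<Rightarrow> 'a::real_normed_vector set" and w :: "nat \<Rightarrow> 'a"
  assumes subspace: "\<And>n. subspace (X n)" and incr: "\<And>n. X n \<subseteq> X (Suc n)"
    and dense: "closure (\<Union>n. X n) = UNIV"
    and w: "\<forall>j<m. norm (w j) = 1" and "\<delta> > 0"
  obtains N where "\<And>n. N \<le> n \<Longrightarrow> \<exists>u. \<forall>j<m. u j \<in> unit_sphere_of (X n) \<and> norm (u j - w j) \<le> \<delta>"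
proof -
  define \<epsilon> where "\<epsilon> = min (1/2) (\<delta>/2)"
  have "\<epsilon> > 0" using \<open>\<delta> > 0\<close> unfolding \<epsilon>_def by simp
  have "\<exists>n y. y \<in> X n \<and> norm (y - w j) < \<epsilon>" for j
  proof -
    have "w j \<in> closure (\<Union>n. X n)" using dense by simp
    then obtain y where "y \<in> (\<Union>n. X n)" "dist y (w j) < \<epsilon>"
      using closure_approachable \<open>\<epsilon> > 0\<close> by blast
    then show ?thesis by (auto simp: dist_norm)
  qed
  then obtain nn y where y: "\<And>j. y j \<in> X (nn j) \<and> norm (y j - w j) < \<epsilon>"
    by metis
  define N where "N = Max (nn ` {..<m})"
  have "\<forall>j<m. y j /\<^sub>R norm (y j) \<in> unit_sphere_of (X n) \<and> norm (y j /\<^sub>R norm (y j) - w j) \<le> \<delta>"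
    if "N \<le> n" for n
  proof (intro allI impI conjI)
    fix j assume "j < m"
    have "nn j \<le> N" unfolding N_def using \<open>j < m\<close> by (intro Max_ge) auto
    then have "nn j \<le> n" using \<open>N \<le> n\<close> by linarith
    then have "y j \<in> X n" using y lift_Suc_mono_le[of X, OF incr] by blast
    moreover have "y j \<noteq> 0" using y[of j] w \<open>j < m\<close> unfolding \<epsilon>_def by auto
    ultimately show "y j /\<^sub>R norm (y j) \<in> unit_sphere_of (X n)"
      unfolding unit_sphere_of_def using subspace_scale[OF subspace] by simp
    have "norm (y j /\<^sub>R norm (y j) - w j) \<le> 2 * norm (y j - w j)"
      using w \<open>j < m\<close> by (intro norm_normalize_diff_le) simp
    then show "norm (y j /\<^sub>R norm (y j) - w j) \<le> \<delta>"
      using y[of j] unfolding \<epsilon>_def by linarith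
  qed
  then show ?thesis
    by (intro that[of N] exI[of _ "\<lambda>j. y j /\<^sub>R norm (y j)"]) auto
qed

lemma r_num_within_perturbed_range:
  fixes T S :: "'a::real_normed_vector set"
  assumes "compact T" "T \<subseteq> S" "bounded S" "1 \<le> m"
    and u: "\<forall>j<m. u j \<in> T" and uw: "\<forall>j<m. norm (u j - w j) \<le> e"
  shows "Inf (avg_dist m w ` S) - e \<le> r_num T \<and> r_num T \<le> Sup (avg_dist m w ` S) + e"
proof -
  have "T \<noteq> {}" using u \<open>1 \<le> m\<close> by auto
  have bdd: "bdd_below (avg_dist m w ` S)" "bdd_above (avg_dist m w ` S)"
    using bounded_avg_dist_image[OF \<open>bounded S\<close>] by (auto simp: bounded_imp_bdd_above bounded_imp_bdd_below)
  have close: "\<bar>avg_dist m u x - avg_dist m w x\<bar> \<le> e" for x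
    using avg_dist_perturb[OF \<open>1 \<le> m\<close> uw] .
  have "r_num T \<in> closure (convex hull (avg_dist m u ` T))"
    using r_num_mem_R_set[OF \<open>compact T\<close> \<open>T \<noteq> {}\<close>] u \<open>1 \<le> m\<close> unfolding mem_R_set_iff by blast
  also have "\<dots> = {Inf (avg_dist m u ` T)..Sup (avg_dist m u ` T)}"
    using \<open>T \<noteq> {}\<close> compact_imp_bounded[OF \<open>compact T\<close>]
    by (intro closure_convex_hull_real_eq bounded_avg_dist_image) auto
  finally have "Inf (avg_dist m u ` T) \<le> r_num T" "r_num T \<le> Sup (avg_dist m u ` T)"
    by auto
  moreover have "Inf (avg_dist m w ` S) - e \<le> Inf (avg_dist m u ` T)"
  proof (intro cInf_greatest)
    fix t assume "t \<in> avg_dist m u ` T"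
    then obtain x where "x \<in> T" "t = avg_dist m u x" by blast
    then show "Inf (avg_dist m w ` S) - e \<le> t"
      using cInf_lower[OF _ bdd(1), of "avg_dist m w x"] close[of x] \<open>T \<subseteq> S\<close> by force
  qed (use \<open>T \<noteq> {}\<close> in simp)
  moreover have "Sup (avg_dist m u ` T) \<le> Sup (avg_dist m w ` S) + e"
  proof (intro cSup_least)
    fix t assume "t \<in> avg_dist m u ` T"
    then obtain x where "x \<in> T" "t = avg_dist m u x" by blast
    then show "t \<le> Sup (avg_dist m w ` S) + e"
      using cSup_upper[OF _ bdd(2), of "avg_dist m w x"] close[of x] \<open>T \<subseteq> S\<close> by force
  qed (use \<open>T \<noteq> {}\<close> in simp)
  ultimately show ?thesis by linarith
qed

lemma r_num_eventually_within_range: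
  fixes X :: "nat \<Rightarrow> 'a::real_normed_vector set" and w :: "nat \<Rightarrow> 'a"
  assumes fin_dim: "\<And>n. \<exists>B. finite B \<and> X n = span B"
    and incr: "\<And>n. X n \<subseteq> X (Suc n)" and dense: "closure (\<Union>n. X n) = UNIV"
    and "1 \<le> m" "\<forall>j<m. w j \<in> sphere 0 1" "e > 0"
  obtains N where "\<And>n. N \<le> n \<Longrightarrow>
    Inf (avg_dist m w ` sphere 0 1) - e \<le> r_num (unit_sphere_of (X n)) \<and>
    r_num (unit_sphere_of (X n)) \<le> Sup (avg_dist m w ` sphere 0 1) + e"
proof -
  have subspace: "subspace (X n)" for n
    using fin_dim by (metis subspace_span)
  have compact: "compact (sphere 0 1 \<inter> X n)" for n
    using fin_dim compact_sphere_inter_span by metis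
  have "bounded (sphere (0::'a) 1)"
    by (rule bounded_subset[OF bounded_cball sphere_cball])
  have "\<forall>j<m. norm (w j) = 1" using assms(5) by simp
  then obtain N where N: "\<And>n. N \<le> n \<Longrightarrow> \<exists>u. \<forall>j<m. u j \<in> unit_sphere_of (X n) \<and> norm (u j - w j) \<le> e"
    using approx_unit_vectors_in_subspaces[OF subspace incr dense _ \<open>e > 0\<close>] by blast
  show ?thesis
  proof (rule that)
    fix n assume "N \<le> n"
    then obtain u where "\<forall>j<m. u j \<in> unit_sphere_of (X n) \<and> norm (u j - w j) \<le> e"
      using N by blast
    then show "Inf (avg_dist m w ` sphere 0 1) - e \<le> r_num (unit_sphere_of (X n)) \<and>
      r_num (unit_sphere_of (X n)) \<le> Sup (avg_dist m w ` sphere 0 1) + e"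
      using \<open>bounded (sphere 0 1)\<close> \<open>1 \<le> m\<close> unfolding unit_sphere_of_def
      by (intro r_num_within_perturbed_range compact) auto
  qed
qed

lemma limit_r_num_within_range:
  fixes X :: "nat \<Rightarrow> 'a::real_normed_vector set" and w :: "nat \<Rightarrow> 'a"
  assumes fin_dim: "\<And>n. \<exists>B. finite B \<and> X n = span B"
    and incr: "\<And>n. X n \<subseteq> X (Suc n)" and dense: "closure (\<Union>n. X n) = UNIV"
    and "strict_mono \<sigma>" and lim: "(\<lambda>k. r_num (unit_sphere_of (X (\<sigma> k)))) \<longlonglongrightarrow> \<rho>"
    and m: "1 \<le> m" and w: "\<forall>j<m. w j \<in> sphere 0 1"
  shows "\<rho> \<in> {Inf (avg_dist m w ` sphere 0 1)..Sup (avg_dist m w ` sphere 0 1)}"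
proof -
  let ?f = "avg_dist m w ` sphere 0 1"
  have "Inf ?f - e \<le> \<rho> \<and> \<rho> \<le> Sup ?f + e" if "e > 0" for e
  proof -
    obtain N where "\<And>n. N \<le> n \<Longrightarrow> Inf ?f - e \<le> r_num (unit_sphere_of (X n)) \<and>
        r_num (unit_sphere_of (X n)) \<le> Sup ?f + e"
      using r_num_eventually_within_range[OF fin_dim incr dense m w \<open>e > 0\<close>] by blast
    then have "\<forall>k\<ge>N. Inf ?f - e \<le> r_num (unit_sphere_of (X (\<sigma> k))) \<and>
        r_num (unit_sphere_of (X (\<sigma> k))) \<le> Sup ?f + e"
      using seq_suble[OF \<open>strict_mono \<sigma>\<close>] order_trans by blast
    then show ?thesis
      using LIMSEQ_le_const[OF lim] LIMSEQ_le_const2[OF lim] by blast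
  qed
  then show ?thesis
    using field_le_epsilon by (metis add.commute atLeastAtMost_iff diff_le_eq)
qed

theorem corollary4p6:
  fixes X :: "nat \<Rightarrow> 'a::real_normed_vector set" and \<rho> :: real
  assumes fin_dim: "\<And>n. \<exists>B. finite B \<and> X n = span B"
    and incr: "\<And>n. X n \<subseteq> X (Suc n)"
    and dense: "closure (\<Union>n. X n) = UNIV"
    and acc: "\<exists>\<sigma>::nat \<Rightarrow> nat. strict_mono \<sigma> \<and>
               ((\<lambda>k. r_num (unit_sphere_of (X (\<sigma> k)))) \<longlonglongrightarrow> \<rho>)"
  shows "\<rho> \<in> calR TYPE('a)"
proof -
  obtain \<sigma> :: "nat \<Rightarrow> nat" where \<sigma>: "strict_mono \<sigma>"
    and lim: "(\<lambda>k. r_num (unit_sphere_of (X (\<sigma> k)))) \<longlonglongrightarrow> \<rho>"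
    using acc by blast
  show ?thesis
    unfolding calR_def mem_R_set_iff
  proof (intro allI impI)
    fix m and w :: "nat \<Rightarrow> 'a"
    assume m: "1 \<le> m" and w: "\<forall>j<m. w j \<in> sphere 0 1"
    have "\<rho> \<in> {Inf (avg_dist m w ` sphere 0 1)..Sup (avg_dist m w ` sphere 0 1)}"
      by (rule limit_r_num_within_range[OF fin_dim incr dense \<sigma> lim m w])
    also have "\<dots> = closure (convex hull (avg_dist m w ` sphere 0 1))"
      using w[rule_format, of 0] m bounded_subset[OF bounded_cball sphere_cball]
      by (intro closure_convex_hull_real_eq[symmetric] bounded_avg_dist_image) auto
    finally show "\<rho> \<in> closure (convex hull (avg_dist m w ` sphere 0 1))" .
  qed
qed

end
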